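(* Let $G$ be a Tanner graph whose smallest left (variable-node) degree $deg_l^-$ is at least 3, whose smallest right (check-node) degree $deg_r^-$ is at least 2, and whose girth $g$ satisfies $g>4$. Then $w^{BSC}_{\min}\ge (deg_l^- -1)^{\lceil g/4\rceil-1}$ and $w^{AWGN}_{\min}\ge (deg_l^- -1)^{\lceil g/4\rceil-1}$.
   Context: A Tanner graph $G$ is a finite bipartite graph with variable nodes $v_1,\dots,v_n$ and check nodes; its code consists of all $x\in\{0,1\}^n$ with every check node having an even number of neighbours $v_i$ with $x_i=1$. A degree-$\ell$ lift replaces each node by $\ell$ copies and each edge by a perfect matching between copy-sets; a lift-realizable pseudocodeword $p\in\mathbb{Z}_{\ge0}^n$ is obtained from a codeword of the code of a finite lift by letting $p_i$ be the number of copies of $v_i$ assigned 1. For nonzero $p$, with $e$ the smallest number such that the sum of the $e$ largest $p_i$ is at least $\frac12\sum_ip_i$, $w^{BSC}(p)=2e$ if equality holds and $2e-1$ otherwise; $w^{AWGN}(p)=(\sum_ip_i)^2/\sum_ip_i^2$. $w^{BSC}_{\min}$, $w^{AWGN}_{\min}$ are the minima of these weights over all nonzero lift-realizable pseudocodewords of $G$. *)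

theory Defs
  imports Complex_Main
begin

text \<open>A Tanner graph with variable nodes 0..<n, check nodes 0..<m, and
  edge relation E (E i j: variable i adjacent to check j); only pairs with
  i < n and j < m are considered edges.\<close>

definition tedge :: "nat \<Rightarrow> nat \<Rightarrow> (nat \<Rightarrow> nat \<Rightarrow> bool) \<Rightarrow> nat \<Rightarrow> nat \<Rightarrow> bool" where
  "tedge n m E i j \<longleftrightarrow> i < n \<and> j < m \<and> E i j"

definition var_deg :: "nat \<Rightarrow> nat \<Rightarrow> (nat \<Rightarrow> nat \<Rightarrow> bool) \<Rightarrow> nat \<Rightarrow> nat" where
  "var_deg n m E i = card {j. tedge n m E i j}"

definition chk_deg :: "nat \<Rightarrow> nat \<Rightarrow> (nat \<Rightarrow> nat \<Rightarrow> bool) \<Rightarrow> nat \<Rightarrow> nat" where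
  "chk_deg n m E j = card {i. tedge n m E i j}"

definition min_left_deg :: "nat \<Rightarrow> nat \<Rightarrow> (nat \<Rightarrow> nat \<Rightarrow> bool) \<Rightarrow> nat" where
  "min_left_deg n m E = Min (var_deg n m E ` {..<n})"

definition min_right_deg :: "nat \<Rightarrow> nat \<Rightarrow> (nat \<Rightarrow> nat \<Rightarrow> bool) \<Rightarrow> nat" where
  "min_right_deg n m E = Min (chk_deg n m E ` {..<m})"

text \<open>Vertices of the Tanner graph as a bipartite graph: Inl i = variable
  node i, Inr j = check node j.\<close>

fun tadj :: "nat \<Rightarrow> nat \<Rightarrow> (nat \<Rightarrow> nat \<Rightarrow> bool) \<Rightarrow> nat + nat \<Rightarrow> nat + nat \<Rightarrow> bool" where
  "tadj n m E (Inl i) (Inr j) = tedge n m E i j"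
| "tadj n m E (Inr j) (Inl i) = tedge n m E i j"
| "tadj n m E _ _ = False"

definition is_cycle :: "nat \<Rightarrow> nat \<Rightarrow> (nat \<Rightarrow> nat \<Rightarrow> bool) \<Rightarrow> (nat + nat) list \<Rightarrow> bool" where
  "is_cycle n m E vs \<longleftrightarrow> length vs \<ge> 3 \<and> distinct vs \<and>
     (\<forall>k < length vs. tadj n m E (vs ! k) (vs ! ((k + 1) mod length vs)))"

text \<open>Girth = length of a shortest cycle (convention: 0 if there is no cycle).\<close>

definition girth :: "nat \<Rightarrow> nat \<Rightarrow> (nat \<Rightarrow> nat \<Rightarrow> bool) \<Rightarrow> nat" where
  "girth n m E = Inf {length vs | vs. is_cycle n m E vs}"

text \<open>A degree-l lift is given by a
  permutation pi i j of the copies {..<l} for each edge (i,j): copy a of v_i is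
  joined to copy (pi i j a) of c_j. x i a says copy a of v_i is assigned 1.\<close>

definition lift_pcw :: "nat \<Rightarrow> nat \<Rightarrow> (nat \<Rightarrow> nat \<Rightarrow> bool) \<Rightarrow> (nat \<Rightarrow> nat) \<Rightarrow> bool" where
  "lift_pcw n m E p \<longleftrightarrow>
     (\<exists>(l::nat) (pi :: nat \<Rightarrow> nat \<Rightarrow> nat \<Rightarrow> nat) (x :: nat \<Rightarrow> nat \<Rightarrow> bool).
        0 < l \<and>
        (\<forall>i j. tedge n m E i j \<longrightarrow> bij_betw (pi i j) {..<l} {..<l}) \<and>
        (\<forall>j < m. \<forall>b < l. even (card {(i, a). i < n \<and> a < l \<and> tedge n m E i j \<and>
                                           pi i j a = b \<and> x i a})) \<and>
        (\<forall>i. p i = (if i < n then card {a. a < l \<and> x i a} else 0)))"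

definition nonzero_pcw :: "nat \<Rightarrow> (nat \<Rightarrow> nat) \<Rightarrow> bool" where
  "nonzero_pcw n p \<longleftrightarrow> (\<exists>i < n. p i \<noteq> 0)"

definition top_sum :: "nat \<Rightarrow> (nat \<Rightarrow> nat) \<Rightarrow> nat \<Rightarrow> nat" where
  "top_sum n p e = Max {sum p S | S. S \<subseteq> {..<n} \<and> card S = e}"

definition bsc_e :: "nat \<Rightarrow> (nat \<Rightarrow> nat) \<Rightarrow> nat" where
  "bsc_e n p = (LEAST e. e \<le> n \<and> 2 * top_sum n p e \<ge> sum p {..<n})"

definition w_bsc :: "nat \<Rightarrow> (nat \<Rightarrow> nat) \<Rightarrow> nat" where
  "w_bsc n p = (let e = bsc_e n p in
      if 2 * top_sum n p e = sum p {..<n} then 2 * e else 2 * e - 1)"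

definition w_awgn :: "nat \<Rightarrow> (nat \<Rightarrow> nat) \<Rightarrow> real" where
  "w_awgn n p = (real (sum p {..<n}))\<^sup>2 / real (\<Sum>i<n. (p i)\<^sup>2)"

end

theory Submission
  imports Defs
begin

(*
  The parity checks of a lift give, for every edge v - c, the local inequality
  p v <= sum of p u over the other neighbours u of c.  Start at a variable node r
  with maximal p and apply it along non-backtracking walks r - c1 - v1 - ... - vk:
  each step offers at least d - 1 fresh check nodes, so (d - 1)^k * p r is bounded
  by the sum of p over the endpoints of all such walks.  When 4k is below the girth,
  different walks have different endpoints, since two walks ending at the same node
  would together contain a cycle of length at most 4k.  Hence
  (d - 1)^k * max p <= sum p, and both weights are at least sum p / max p.
*)

section \<open>Cycles from non-backtracking walks\<close>

definition nb_walk :: "('v \<Rightarrow> 'v \<Rightarrow> bool) \<Rightarrow> nat \<Rightarrow> (nat \<Rightarrow> 'v) \<Rightarrow> bool" where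
  "nb_walk R L f \<longleftrightarrow> (\<forall>s<L. R (f s) (f (s + 1))) \<and> (\<forall>s. s + 2 \<le> L \<longrightarrow> f s \<noteq> f (s + 2))"

definition cycle_of :: "('v \<Rightarrow> 'v \<Rightarrow> bool) \<Rightarrow> 'v list \<Rightarrow> bool" where
  "cycle_of R vs \<longleftrightarrow> 3 \<le> length vs \<and> distinct vs \<and>
     (\<forall>k<length vs. R (vs ! k) (vs ! ((k + 1) mod length vs)))"

lemma nb_walk_SucD: "nb_walk R (Suc L) f \<Longrightarrow> nb_walk R L f"
  by (simp add: nb_walk_def)

lemma nb_walk_snoc:
  assumes "nb_walk R L (nth w)" and "length w = L + 1"
    and "R (last w) x" and "0 < L \<Longrightarrow> x \<noteq> w ! (L - 1)"
  shows "nb_walk R (L + 1) (nth (w @ [x]))"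
proof -
  have old: "(w @ [x]) ! s = w ! s" if "s \<le> L" for s
    using that assms(2) by (simp add: nth_append)
  have new: "(w @ [x]) ! (L + 1) = x"
    using assms(2) by (simp add: nth_append)
  have "last w = w ! L"
    using assms(2) last_conv_nth[of w] by fastforce
  then have "R ((w @ [x]) ! s) ((w @ [x]) ! (s + 1))" if "s < L + 1" for s
    using that assms(1,3) old new by (cases "s = L") (auto simp: nb_walk_def)
  moreover have "(w @ [x]) ! s \<noteq> (w @ [x]) ! (s + 2)" if "s + 2 \<le> L + 1" for s
    using that assms(1,4) old new by (cases "s + 1 = L") (auto simp: nb_walk_def)
  ultimately show ?thesis
    by (simp add: nb_walk_def)
qed

text \<open>The shortest repetition \<open>f i = f (i + D)\<close> along the walk spans a cycle; \<open>D \<ge> 3\<close> because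
  \<open>R\<close> is irreflexive and the walk does not backtrack.\<close>

lemma closed_nb_walk_has_cycle:
  assumes "irreflp R" "nb_walk R L f" "0 < L" "f 0 = f L"
  shows "\<exists>vs. cycle_of R vs \<and> length vs \<le> L"
proof -
  define repeat where "repeat D \<longleftrightarrow> 0 < D \<and> (\<exists>i. i + D \<le> L \<and> f i = f (i + D))" for D
  have "repeat L"
    using assms by (auto simp: repeat_def)
  then obtain D where D: "repeat D" and D_min: "\<And>D'. repeat D' \<Longrightarrow> D \<le> D'"
    by (metis LeastI Least_le)
  then obtain i where i: "0 < D" "i + D \<le> L" "f i = f (i + D)"
    by (auto simp: repeat_def)
  have walk: "R (f s) (f (s + 1))" if "s < L" for s
    using assms(2) that by (simp add: nb_walk_def)
  have "D \<noteq> 1"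
    using i walk[of i] assms(1) by (auto simp: irreflp_def)
  moreover have "D \<noteq> 2"
    using i assms(2) by (auto simp: nb_walk_def)
  ultimately have "3 \<le> D"
    using i(1) by linarith
  define vs where "vs = map (\<lambda>q. f (i + q)) [0..<D]"
  have "inj_on (\<lambda>q. f (i + q)) {0..<D}"
  proof (rule linorder_inj_onI')
    fix a b assume "a \<in> {0..<D}" "b \<in> {0..<D}" "a < b"
    then have "\<not> repeat (b - a)"
      using D_min by (metis atLeastLessThan_iff diff_le_self le_less_trans leD)
    moreover have "i + a + (b - a) = i + b" "i + b \<le> L"
      using \<open>a < b\<close> \<open>b \<in> {0..<D}\<close> i(2) by auto
    ultimately show "f (i + a) \<noteq> f (i + b)"
      using \<open>a < b\<close> unfolding repeat_def by (metis zero_less_diff)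
  qed
  then have "distinct vs"
    by (simp add: vs_def distinct_map)
  moreover have "R (vs ! q) (vs ! ((q + 1) mod D))" if "q < D" for q
  proof -
    have "vs ! ((q + 1) mod D) = f (i + q + 1)"
      using that i by (cases "q + 1 = D") (auto simp: vs_def)
    then show ?thesis
      using that i walk[of "i + q"] by (simp add: vs_def)
  qed
  ultimately have "cycle_of R vs"
    using \<open>3 \<le> D\<close> by (simp add: cycle_of_def vs_def)
  then show ?thesis
    using i by (intro exI[of _ vs]) (simp add: vs_def)
qed

lemma nb_walk_glue_reverse:
  assumes "symp R" "nb_walk R L a" "nb_walk R L b" "0 < L" "a L = b L" "a (L - 1) \<noteq> b (L - 1)"
  shows "nb_walk R (2 * L) (\<lambda>s. if s \<le> L then a s else b (2 * L - s))"
    (is "nb_walk R _ ?f")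
proof -
  have f_b: "?f s = b (2 * L - s)" if "L \<le> s" for s
    using that assms(5) by (cases "s = L") auto
  have "R (?f s) (?f (s + 1))" if "s < 2 * L" for s
  proof (cases "s < L")
    case True
    then show ?thesis
      using assms(2) by (simp add: nb_walk_def)
  next
    case False
    then have "R (b (2 * L - (s + 1))) (b (2 * L - (s + 1) + 1))"
      using assms(3) that by (simp add: nb_walk_def)
    moreover have "2 * L - (s + 1) + 1 = 2 * L - s"
      using that by simp
    ultimately show ?thesis
      using False f_b[of s] f_b[of "s + 1"] assms(1) by (simp add: symp_def)
  qed
  moreover have "?f s \<noteq> ?f (s + 2)" if "s + 2 \<le> 2 * L" for s
  proof -
    consider "s + 2 \<le> L" | "s + 1 = L" | "L \<le> s"
      by linarith
    then show ?thesis
    proof cases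
      case 1
      then show ?thesis
        using assms(2) by (simp add: nb_walk_def)
    next
      case 2
      then show ?thesis
        using f_b[of "s + 2"] assms(6) by auto
    next
      case 3
      then have "b (2 * L - (s + 2)) \<noteq> b (2 * L - (s + 2) + 2)"
        using assms(3) that by (simp add: nb_walk_def)
      moreover have "2 * L - (s + 2) + 2 = 2 * L - s"
        using that by simp
      ultimately show ?thesis
        using 3 f_b[of s] f_b[of "s + 2"] by (metis le_add1 order_trans)
    qed
  qed
  ultimately show ?thesis
    by (simp add: nb_walk_def)
qed

text \<open>If the walks agree one step before the end, shorten both; otherwise \<open>a\<close> followed by
  \<open>b\<close> backwards is a closed walk of length \<open>2 L\<close> that does not backtrack.\<close>

lemma nb_walks_differ_has_cycle:
  assumes "symp R" "irreflp R" "nb_walk R L a" "nb_walk R L b"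
    and "a 0 = b 0" "a L = b L" "s \<le> L" "a s \<noteq> b s"
  shows "\<exists>vs. cycle_of R vs \<and> length vs \<le> 2 * L"
  using assms(3-8)
proof (induction L arbitrary: s)
  case 0
  then show ?case
    by simp
next
  case (Suc L)
  show ?case
  proof (cases "a L = b L")
    case True
    have "s \<le> L"
      using Suc.prems(4-6) by (metis le_Suc_eq)
    then obtain vs where "cycle_of R vs" "length vs \<le> 2 * L"
      using Suc.IH Suc.prems(1-3,6) True nb_walk_SucD by blast
    then show ?thesis
      by auto
  next
    case False
    let ?f = "\<lambda>t. if t \<le> Suc L then a t else b (2 * Suc L - t)"
    have "nb_walk R (2 * Suc L) ?f"
      using nb_walk_glue_reverse[OF assms(1) Suc.prems(1,2)] Suc.prems(4) False by simp
    moreover have "?f 0 = ?f (2 * Suc L)"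
      using Suc.prems(3) by simp
    ultimately show ?thesis
      using closed_nb_walk_has_cycle[OF assms(2)] by simp
  qed
qed

section \<open>The local inequality of lift-realizable pseudocodewords\<close>

lemma even_card_ex_other:
  assumes "finite A" "even (card A)" "x \<in> A"
  shows "\<exists>y\<in>A. y \<noteq> x"
proof (rule ccontr)
  assume "\<not> ?thesis"
  then have "A = {x}"
    using assms(3) by blast
  then show False
    using assms(2) by simp
qed

lemma lift_parity_partner:
  fixes \<pi> :: "nat \<Rightarrow> nat \<Rightarrow> nat \<Rightarrow> nat" and x :: "nat \<Rightarrow> nat \<Rightarrow> bool"
  assumes inj: "inj_on (\<pi> v c) {..<l}" and "tedge n m E v c" "a < l" "x v a"
    and parity: "even (card {(i, a'). i < n \<and> a' < l \<and> tedge n m E i c \<and> \<pi> i c a' = \<pi> v c a \<and> x i a'})"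
  shows "\<exists>u a'. u \<noteq> v \<and> tedge n m E u c \<and> a' < l \<and> x u a' \<and> \<pi> u c a' = \<pi> v c a"
proof -
  define K where "K = {(i, a'). i < n \<and> a' < l \<and> tedge n m E i c \<and> \<pi> i c a' = \<pi> v c a \<and> x i a'}"
  have "finite K"
    by (rule finite_subset[of _ "{..<n} \<times> {..<l}"]) (auto simp: K_def)
  moreover have "(v, a) \<in> K"
    using assms(2-4) by (simp add: K_def tedge_def)
  ultimately have "\<exists>y\<in>K. y \<noteq> (v, a)"
    using parity by (intro even_card_ex_other) (simp_all add: K_def)
  then obtain u a' where ua': "(u, a') \<in> K" "(u, a') \<noteq> (v, a)"
    by auto
  have "u \<noteq> v"
  proof
    assume "u = v"
    then have "a' = a"
      using ua'(1) assms(3) inj by (auto simp: K_def dest: inj_onD)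
    then show False
      using ua'(2) \<open>u = v\<close> by simp
  qed
  then show ?thesis
    using ua'(1) by (auto simp: K_def)
qed

text \<open>The permutation \<open>\<pi> v c\<close> maps the copies of \<open>v\<close> assigned 1 injectively to copies of \<open>c\<close>;
  by parity each of these is also reached from a copy, assigned 1, of another neighbour of \<open>c\<close>.\<close>

lemma lift_pcw_le_sum_other_neighbours:
  assumes "lift_pcw n m E p" and vc: "tedge n m E v c"
  shows "p v \<le> (\<Sum>u | tedge n m E u c \<and> u \<noteq> v. p u)"
proof -
  obtain l :: nat and \<pi> :: "nat \<Rightarrow> nat \<Rightarrow> nat \<Rightarrow> nat" and x :: "nat \<Rightarrow> nat \<Rightarrow> bool"
    where bij: "\<forall>i j. tedge n m E i j \<longrightarrow> bij_betw (\<pi> i j) {..<l} {..<l}"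
      and parity: "\<forall>j < m. \<forall>b < l. even (card {(i, a). i < n \<and> a < l \<and>
                      tedge n m E i j \<and> \<pi> i j a = b \<and> x i a})"
      and p_def: "\<forall>i. p i = (if i < n then card {a. a < l \<and> x i a} else 0)"
    using assms(1) unfolding lift_pcw_def by (elim exE conjE) (rule that, assumption+)
  have "v < n" "c < m"
    using vc by (auto simp: tedge_def)
  define U where "U = {u. tedge n m E u c \<and> u \<noteq> v}"
  define ones where "ones u = {a. a < l \<and> x u a}" for u
  define T where "T = Sigma U ones"
  have "finite U"
    by (rule finite_subset[of _ "{..<n}"]) (auto simp: U_def tedge_def)
  then have "finite T"
    by (simp add: T_def ones_def)
  have inj: "inj_on (\<pi> v c) {..<l}"
    using bij vc bij_betw_imp_inj_on by blast
  have "\<pi> v c ` ones v \<subseteq> (\<lambda>(u, a). \<pi> u c a) ` T"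
  proof
    fix b assume "b \<in> \<pi> v c ` ones v"
    then obtain a where a: "a < l" "x v a" "b = \<pi> v c a"
      by (auto simp: ones_def)
    then have "\<pi> v c a < l"
      using bij vc by (auto dest: bij_betwE)
    then obtain u a' where "u \<noteq> v" "tedge n m E u c" "a' < l" "x u a'" "\<pi> u c a' = b"
      using lift_parity_partner[where \<pi> = \<pi> and x = x, OF inj vc a(1,2)] parity \<open>c < m\<close> a(3) by blast
    then show "b \<in> (\<lambda>(u, a). \<pi> u c a) ` T"
      by (intro image_eqI[where x = "(u, a')"]) (auto simp: T_def U_def ones_def)
  qed
  then have "card (\<pi> v c ` ones v) \<le> card T"
    using \<open>finite T\<close> by (meson card_image_le card_mono finite_imageI order_trans)
  moreover have "card (\<pi> v c ` ones v) = p v"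
    using inj \<open>v < n\<close> by (simp add: card_image inj_on_subset ones_def p_def subset_eq)
  moreover have "card T = sum p U"
    using \<open>finite U\<close> by (simp add: T_def card_SigmaI ones_def p_def U_def tedge_def)
  ultimately show ?thesis
    by (simp add: U_def)
qed

section \<open>Non-backtracking walks in a Tanner graph\<close>

lemma tadj_symp: "symp (tadj n m E)"
proof (rule sympI)
  fix x y assume "tadj n m E x y"
  then show "tadj n m E y x"
    by (cases x; cases y) auto
qed

lemma tadj_irreflp: "irreflp (tadj n m E)"
proof (rule irreflpI)
  fix x show "\<not> tadj n m E x x"
    by (cases x) auto
qed

lemma is_cycle_eq_cycle_of: "is_cycle n m E = cycle_of (tadj n m E)"
  by (simp add: fun_eq_iff is_cycle_def cycle_of_def)

context
  fixes n m :: nat and E :: "nat \<Rightarrow> nat \<Rightarrow> bool"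
begin

definition walk_end :: "(nat + nat) list \<Rightarrow> nat" where
  "walk_end w = projl (last w)"

definition next_checks :: "(nat + nat) list \<Rightarrow> nat set" where
  "next_checks w = {c. tedge n m E (walk_end w) c \<and> (3 \<le> length w \<longrightarrow> Inr c \<noteq> w ! (length w - 2))}"

definition next_vars :: "(nat + nat) list \<Rightarrow> nat \<Rightarrow> nat set" where
  "next_vars w c = {u. tedge n m E u c \<and> u \<noteq> walk_end w}"

fun nb_walks :: "nat \<Rightarrow> nat \<Rightarrow> (nat + nat) list set" where
  "nb_walks r 0 = {[Inl r]}"
| "nb_walks r (Suc t) = (\<lambda>(w, c, u). w @ [Inr c, Inl u]) `
     (SIGMA w:nb_walks r t. SIGMA c:next_checks w. next_vars w c)"

lemma finite_next_checks: "finite (next_checks w)"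
  by (rule finite_subset[of _ "{..<m}"]) (auto simp: next_checks_def tedge_def)

lemma finite_next_vars: "finite (next_vars w c)"
  by (rule finite_subset[of _ "{..<n}"]) (auto simp: next_vars_def tedge_def)

lemma finite_nb_walks: "finite (nb_walks r t)"
  by (induction t) (auto simp: finite_next_checks finite_next_vars)

lemma nb_walks_length: "w \<in> nb_walks r t \<Longrightarrow> length w = 2 * t + 1"
  by (induction t arbitrary: w) auto

lemma nb_walks_first: "w \<in> nb_walks r t \<Longrightarrow> w ! 0 = Inl r"
  by (induction t arbitrary: w) (use nb_walks_length in \<open>fastforce simp: nth_append\<close>)+

lemma nb_walks_last: "w \<in> nb_walks r t \<Longrightarrow> last w = Inl (walk_end w)"
  by (cases t) (auto simp: walk_end_def)

lemma nb_walks_nth_last: "w \<in> nb_walks r t \<Longrightarrow> w ! (2 * t) = Inl (walk_end w)"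
  using nb_walks_last nb_walks_length by (metis add_diff_cancel_right' last_conv_nth list.size(3) zero_neq_one add_is_0)

lemma walk_end_less: "r < n \<Longrightarrow> w \<in> nb_walks r t \<Longrightarrow> walk_end w < n"
  by (cases t) (auto simp: walk_end_def next_vars_def tedge_def)

lemma walk_end_append [simp]: "walk_end (w @ [Inr c, Inl u]) = u"
  by (simp add: walk_end_def)

lemma nb_walks_nb_walk: "w \<in> nb_walks r t \<Longrightarrow> nb_walk (tadj n m E) (2 * t) (nth w)"
proof (induction t arbitrary: w)
  case 0
  then show ?case
    by (simp add: nb_walk_def)
next
  case (Suc t)
  then obtain w0 c u where w: "w = w0 @ [Inr c] @ [Inl u]" and w0: "w0 \<in> nb_walks r t"
    and c: "c \<in> next_checks w0" and u: "u \<in> next_vars w0 c"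
    by auto
  have len: "length w0 = 2 * t + 1"
    using w0 by (rule nb_walks_length)
  have "nb_walk (tadj n m E) (2 * t + 1) (nth (w0 @ [Inr c]))"
    by (rule nb_walk_snoc[OF Suc.IH[OF w0] len])
      (use c nb_walks_last[OF w0] len in \<open>auto simp: next_checks_def\<close>)
  then have "nb_walk (tadj n m E) (2 * t + 1 + 1) (nth ((w0 @ [Inr c]) @ [Inl u]))"
    by (rule nb_walk_snoc)
      (use u nb_walks_nth_last[OF w0] len in \<open>auto simp: next_vars_def nth_append\<close>)
  then show ?case
    by (simp add: w)
qed

lemma sum_nb_walks_Suc:
  "(\<Sum>w\<in>nb_walks r (Suc t). f (walk_end w)) =
   (\<Sum>w\<in>nb_walks r t. \<Sum>c\<in>next_checks w. \<Sum>u\<in>next_vars w c. f u)"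
proof -
  let ?S = "SIGMA w:nb_walks r t. SIGMA c:next_checks w. next_vars w c"
  have "inj_on (\<lambda>(w, c, u). w @ [Inr c, Inl u]) ?S"
    by (rule inj_onI) auto
  then have "(\<Sum>w\<in>nb_walks r (Suc t). f (walk_end w)) = (\<Sum>(w, c, u)\<in>?S. f u)"
    by (simp add: sum.reindex case_prod_unfold)
  also have "\<dots> = (\<Sum>w\<in>nb_walks r t. \<Sum>c\<in>next_checks w. \<Sum>u\<in>next_vars w c. f u)"
    by (simp add: sum.Sigma finite_nb_walks finite_next_checks finite_next_vars)
  finally show ?thesis .
qed

lemma card_next_checks:
  assumes "d \<le> var_deg n m E (walk_end w)"
  shows "d - 1 \<le> card (next_checks w)"
proof -
  let ?back = "projr (w ! (length w - 2))"
  have "{c. tedge n m E (walk_end w) c} \<subseteq> insert ?back (next_checks w)"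
    by (auto simp: next_checks_def) (metis sum.sel(2))
  then have "var_deg n m E (walk_end w) \<le> card (insert ?back (next_checks w))"
    unfolding var_deg_def by (intro card_mono) (simp_all add: finite_next_checks)
  also have "\<dots> \<le> Suc (card (next_checks w))"
    by (simp add: card_insert_if finite_next_checks)
  finally show ?thesis
    using assms by simp
qed

lemma pow_mult_le_sum_nb_walks:
  assumes local_ineq: "\<And>v c. tedge n m E v c \<Longrightarrow> p v \<le> (\<Sum>u | tedge n m E u c \<and> u \<noteq> v. p u)"
    and deg: "\<And>v. v < n \<Longrightarrow> d \<le> var_deg n m E v" and "r < n"
  shows "(d - 1) ^ t * p r \<le> (\<Sum>w\<in>nb_walks r t. p (walk_end w))"
proof (induction t)
  case 0
  then show ?case
    by (simp add: walk_end_def)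
next
  case (Suc t)
  have step: "(d - 1) * p (walk_end w) \<le> (\<Sum>c\<in>next_checks w. \<Sum>u\<in>next_vars w c. p u)"
    if "w \<in> nb_walks r t" for w
  proof -
    have "(d - 1) * p (walk_end w) \<le> card (next_checks w) * p (walk_end w)"
      using card_next_checks deg walk_end_less[OF \<open>r < n\<close> that] by simp
    also have "\<dots> = (\<Sum>c\<in>next_checks w. p (walk_end w))"
      by simp
    also have "\<dots> \<le> (\<Sum>c\<in>next_checks w. \<Sum>u\<in>next_vars w c. p u)"
      by (rule sum_mono) (simp add: local_ineq next_checks_def next_vars_def)
    finally show ?thesis .
  qed
  have "(d - 1) ^ Suc t * p r = (d - 1) * ((d - 1) ^ t * p r)"
    by simp
  also have "\<dots> \<le> (d - 1) * (\<Sum>w\<in>nb_walks r t. p (walk_end w))"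
    using Suc.IH by simp
  also have "\<dots> = (\<Sum>w\<in>nb_walks r t. (d - 1) * p (walk_end w))"
    by (simp add: sum_distrib_left)
  also have "\<dots> \<le> (\<Sum>w\<in>nb_walks r t. \<Sum>c\<in>next_checks w. \<Sum>u\<in>next_vars w c. p u)"
    using step by (rule sum_mono)
  also have "\<dots> = (\<Sum>w\<in>nb_walks r (Suc t). p (walk_end w))"
    by (rule sum_nb_walks_Suc[symmetric])
  finally show ?case .
qed

lemma inj_on_walk_end:
  assumes "\<And>vs. is_cycle n m E vs \<Longrightarrow> 4 * t < length vs"
  shows "inj_on walk_end (nb_walks r t)"
proof (rule inj_onI)
  fix w1 w2 assume w1: "w1 \<in> nb_walks r t" and w2: "w2 \<in> nb_walks r t"
    and same_end: "walk_end w1 = walk_end w2"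
  show "w1 = w2"
  proof (rule ccontr)
    assume "w1 \<noteq> w2"
    then obtain s where s: "s \<le> 2 * t" "w1 ! s \<noteq> w2 ! s"
      using nb_walks_length[OF w1] nb_walks_length[OF w2] nth_equalityI
      by (metis less_Suc_eq_le Suc_eq_plus1)
    have "w1 ! 0 = w2 ! 0" "w1 ! (2 * t) = w2 ! (2 * t)"
      using nb_walks_first[OF w1] nb_walks_first[OF w2]
        nb_walks_nth_last[OF w1] nb_walks_nth_last[OF w2] same_end by simp_all
    then obtain vs where "cycle_of (tadj n m E) vs" "length vs \<le> 2 * (2 * t)"
      using nb_walks_differ_has_cycle[OF tadj_symp tadj_irreflp
          nb_walks_nb_walk[OF w1] nb_walks_nb_walk[OF w2] _ _ s]
      by blast
    then show False
      using assms by (fastforce simp: is_cycle_eq_cycle_of)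
  qed
qed

lemma lift_pcw_pow_mult_le_sum:
  assumes "lift_pcw n m E p" and "\<And>vs. is_cycle n m E vs \<Longrightarrow> 4 * t < length vs"
    and "\<And>v. v < n \<Longrightarrow> d \<le> var_deg n m E v" and "r < n"
  shows "(d - 1) ^ t * p r \<le> (\<Sum>i<n. p i)"
proof -
  have "(d - 1) ^ t * p r \<le> (\<Sum>w\<in>nb_walks r t. p (walk_end w))"
    using lift_pcw_le_sum_other_neighbours[OF assms(1)] assms(3,4) by (rule pow_mult_le_sum_nb_walks)
  also have "\<dots> = sum p (walk_end ` nb_walks r t)"
    by (simp add: sum.reindex[OF inj_on_walk_end[OF assms(2)]])
  also have "\<dots> \<le> (\<Sum>i<n. p i)"
    using walk_end_less[OF assms(4)] by (intro sum_mono2) auto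
  finally show ?thesis .
qed

end

lemma girth_le_cycle_length: "is_cycle n m E vs \<Longrightarrow> girth n m E \<le> length vs"
  unfolding girth_def by (rule cInf_lower) auto

lemma four_mul_ceiling_quarter_less:
  assumes "0 < g"
  shows "4 * (nat \<lceil>real g / 4\<rceil> - 1) < g"
proof -
  have "1 \<le> \<lceil>real g / 4\<rceil>"
    using assms by simp
  then obtain j where j: "\<lceil>real g / 4\<rceil> = int j + 1"
    by (metis zle_iff_zadd add.commute)
  then have "real j < real g / 4"
    using ceiling_correct[of "real g / 4"] by simp
  then show ?thesis
    using j by (simp add: nat_int_add)
qed

section \<open>Bounds on the pseudocodeword weights\<close>

lemma ex_max_lessThan:
  fixes f :: "nat \<Rightarrow> 'a::linorder"
  assumes "0 < n"
  shows "\<exists>r<n. \<forall>i<n. f i \<le> f r"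
proof -
  have "Max (f ` {..<n}) \<in> f ` {..<n}"
    using assms by (intro Max_in) auto
  then obtain r where "r < n" "f r = Max (f ` {..<n})"
    by auto
  then show ?thesis
    by (intro exI[of _ r]) auto
qed

lemma top_sum_le:
  assumes "e \<le> n" and "\<And>i. i < n \<Longrightarrow> p i \<le> M"
  shows "top_sum n p e \<le> e * M"
proof -
  let ?Ss = "{S. S \<subseteq> {..<n} \<and> card S = e}"
  have sums: "{sum p S | S. S \<subseteq> {..<n} \<and> card S = e} = sum p ` ?Ss"
    by auto
  have "finite ?Ss"
    by (rule finite_subset[of _ "Pow {..<n}"]) auto
  moreover have "{..<e} \<in> ?Ss"
    using assms(1) by auto
  moreover have "sum p S \<le> e * M" if "S \<in> ?Ss" for S
    using that assms(2) sum_bounded_above[of S p M] by auto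
  ultimately show ?thesis
    unfolding top_sum_def sums by (intro Max.boundedI) blast+
qed

lemma top_sum_all: "top_sum n p n = (\<Sum>i<n. p i)"
proof -
  have "{S. S \<subseteq> {..<n} \<and> card S = n} = {{..<n}}"
    using card_subset_eq[OF finite_lessThan] by auto
  then have "{sum p S | S. S \<subseteq> {..<n} \<and> card S = n} = {sum p {..<n}}"
    by (simp add: setcompr_eq_image)
  then show ?thesis
    by (simp add: top_sum_def)
qed

lemma bsc_e_spec: "bsc_e n p \<le> n \<and> (\<Sum>i<n. p i) \<le> 2 * top_sum n p (bsc_e n p)"
  unfolding bsc_e_def
  by (rule LeastI[where P = "\<lambda>e. e \<le> n \<and> (\<Sum>i<n. p i) \<le> 2 * top_sum n p e" and k = n])
    (simp add: top_sum_all)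

lemma w_bsc_ge:
  assumes "\<And>i. i < n \<Longrightarrow> p i \<le> M" and "0 < M" and "B * M \<le> (\<Sum>i<n. p i)"
  shows "B \<le> w_bsc n p"
proof -
  define e where "e = bsc_e n p"
  have top: "top_sum n p e \<le> e * M"
    using bsc_e_spec top_sum_le assms(1) by (simp add: e_def)
  show ?thesis
  proof (cases "2 * top_sum n p e = (\<Sum>i<n. p i)")
    case True
    then have "B * M \<le> (2 * e) * M"
      using assms(3) top by linarith
    then show ?thesis
      using True assms(2) by (simp add: w_bsc_def e_def Let_def)
  next
    case False
    moreover have "2 * top_sum n p e \<le> (2 * e) * M"
      using top by simp
    ultimately have "B * M < (2 * e) * M"
      using assms(3) bsc_e_spec[of n p] unfolding e_def by linarith
    then have "B < 2 * e"
      by simp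
    then show ?thesis
      using False by (simp add: w_bsc_def e_def Let_def)
  qed
qed

lemma w_awgn_ge:
  assumes "\<And>i. i < n \<Longrightarrow> p i \<le> M" and "\<exists>i<n. p i \<noteq> 0" and "B * M \<le> (\<Sum>i<n. p i)"
  shows "real B \<le> w_awgn n p"
proof -
  define S where "S = (\<Sum>i<n. p i)"
  define Q where "Q = (\<Sum>i<n. (p i)\<^sup>2)"
  have "Q \<le> M * S"
    unfolding Q_def S_def sum_distrib_left power2_eq_square
    using assms(1) by (intro sum_mono) simp
  then have "B * Q \<le> (B * M) * S"
    by (simp add: mult.assoc)
  also have "\<dots> \<le> S * S"
    using assms(3) by (simp add: S_def)
  finally have "B * Q \<le> S * S" .
  moreover have "0 < Q"
    using assms(2) by (auto simp: Q_def intro: sum_pos2)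
  ultimately have "real B \<le> (real S)\<^sup>2 / real Q"
    by (simp add: pos_le_divide_eq power2_eq_square flip: of_nat_mult)
  then show ?thesis
    by (simp add: w_awgn_def S_def Q_def)
qed

theorem corollary1:
  fixes n m :: nat and E :: "nat \<Rightarrow> nat \<Rightarrow> bool"
  assumes "0 < n" and "0 < m"
    and "min_left_deg n m E \<ge> 3"
    and "min_right_deg n m E \<ge> 2"
    and "girth n m E > 4"
  shows "\<forall>p. lift_pcw n m E p \<and> nonzero_pcw n p \<longrightarrow>
           real (w_bsc n p) \<ge> real ((min_left_deg n m E - 1) ^ (nat \<lceil>real (girth n m E) / 4\<rceil> - 1))
         \<and> w_awgn n p \<ge> real ((min_left_deg n m E - 1) ^ (nat \<lceil>real (girth n m E) / 4\<rceil> - 1))"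
proof (intro allI impI)
  let ?d = "min_left_deg n m E" and ?k = "nat \<lceil>real (girth n m E) / 4\<rceil> - 1"
  fix p assume "lift_pcw n m E p \<and> nonzero_pcw n p"
  then have lift: "lift_pcw n m E p" and nonzero: "\<exists>i<n. p i \<noteq> 0"
    by (auto simp: nonzero_pcw_def)
  obtain r where "r < n" and max: "\<And>i. i < n \<Longrightarrow> p i \<le> p r"
    using ex_max_lessThan[OF \<open>0 < n\<close>] by blast
  have "0 < p r"
    using nonzero max by (metis gr0I le_0_eq)
  have "4 * ?k < girth n m E"
    using four_mul_ceiling_quarter_less assms(5) by simp
  then have "\<And>vs. is_cycle n m E vs \<Longrightarrow> 4 * ?k < length vs"
    using girth_le_cycle_length by (blast intro: less_le_trans)
  moreover have "\<And>v. v < n \<Longrightarrow> ?d \<le> var_deg n m E v"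
    unfolding min_left_deg_def by simp
  ultimately have bound: "(?d - 1) ^ ?k * p r \<le> (\<Sum>i<n. p i)"
    using lift \<open>r < n\<close> by (intro lift_pcw_pow_mult_le_sum)
  have "(?d - 1) ^ ?k \<le> w_bsc n p"
    using max \<open>0 < p r\<close> bound by (rule w_bsc_ge)
  moreover have "real ((?d - 1) ^ ?k) \<le> w_awgn n p"
    using max nonzero bound by (rule w_awgn_ge)
  ultimately show "real (w_bsc n p) \<ge> real ((?d - 1) ^ ?k) \<and> w_awgn n p \<ge> real ((?d - 1) ^ ?k)"
    by simp
qed

end
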